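(* Consider the network with vertices $s_1,s_2,s_3,t$ and directed edges $(s_3,s_1),(s_3,s_2),(s_1,t),(s_2,t)$, messages $X_1^k,X_2^k,X_3^k$ with all $3k$ components i.i.d. uniform on a finite alphabet $\mathcal{A}$ ($|\mathcal{A}|>1$), and a demand function $f:\mathcal{A}^3\to\mathcal{B}$ applied componentwise. Let $\mathcal{C}_{f,k}$ be a source-network code that computes $f(X_1^k,X_2^k,X_3^k)$ at $t$ with zero error, and let $\mathbf{a}_3\in\mathcal{A}^k$ be a realization of $X_3^k$. Then for $u\in\{1,2\}$, the number of distinct $\mathbf{Z}_u$-labels that must be transmitted on the edge $(s_u,t)$ (i.e. the number of distinct values of $\mathbf{Z}_u$ over all $X_u^k\in\mathcal{A}^k$ with $X_3^k=\mathbf{a}_3$) is at least $V_u(\mathbf{a}_3)\triangleq\prod_{i=1}^k V_u(a_3^{(i)})$. Moreover, if $\mathbf{x}_1\not\equiv^{\mathbf{a}_3}\mathbf{y}_1|_1$, then $\phi_{(s_1,t)}(\mathbf{x}_1,\phi_{(s_3,s_1)}(\mathbf{a}_3))\neq\phi_{(s_1,t)}(\mathbf{y}_1,\phi_{(s_3,s_1)}(\mathbf{a}_3))$, and analogously, if $\mathbf{x}_2\not\equiv^{\mathbf{a}_3}\mathbf{y}_2|_2$, then $\phi_{(s_2,t)}(\mathbf{x}_2,\phi_{(s_3,s_2)}(\mathbf{a}_3))\neq\phi_{(s_2,t)}(\mathbf{y}_2,\phi_{(s_3,s_2)}(\mathbf{a}_3))$.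
   Context: A source-network code $\mathcal{C}_{f,k}$ consists of encoders $\phi_{(s_3,s_1)},\phi_{(s_3,s_2)}:\mathcal{A}^k\to\mathcal{Z}^*$, $\phi_{(s_1,t)},\phi_{(s_2,t)}:\mathcal{A}^k\times\mathcal{Z}^*\to\mathcal{Z}^*$ (where $\mathcal{Z}^*$ is the set of finite sequences over a finite alphabet $\mathcal{Z}$, $|\mathcal{Z}|>1$) and a decoder $\psi_t:\mathcal{Z}^*\times\mathcal{Z}^*\to\mathcal{B}^k$, with $\mathbf{Z}_1=\phi_{(s_1,t)}(X_1^k,\phi_{(s_3,s_1)}(X_3^k))$, $\mathbf{Z}_2=\phi_{(s_2,t)}(X_2^k,\phi_{(s_3,s_2)}(X_3^k))$ and zero error meaning $\Pr\{\psi_t(\mathbf{Z}_1,\mathbf{Z}_2)\ne f(X_1^k,X_2^k,X_3^k)\}=0$. For $a_3\in\mathcal{A}$ and $x,y\in\mathcal{A}$: $x\equiv^{a_3}y|_1$ iff $f(x,z,a_3)=f(y,z,a_3)$ for all $z\in\mathcal{A}$; $x\equiv^{a_3}y|_2$ iff $f(z,x,a_3)=f(z,y,a_3)$ for all $z\in\mathcal{A}$. These are equivalence relations on $\mathcal{A}$, and $V_u(a_3)$ denotes the number of equivalence classes of $\equiv^{a_3}|_u$. For vectors $\mathbf{x}_u,\mathbf{y}_u,\mathbf{a}_3\in\mathcal{A}^k$: $\mathbf{x}_u\equiv^{\mathbf{a}_3}\mathbf{y}_u|_u$ iff $x_u^{(j)}\equiv^{a_3^{(j)}}y_u^{(j)}|_u$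 for all $j=1,\ldots,k$. *)

theory Defs
  imports "HOL-Probability.Probability"
begin

text \<open>Vectors in A^k are lists of length k; Z^* is the type of lists over 'z.\<close>

definition vecs :: "nat \<Rightarrow> 'a list set" where
  "vecs k = {xs. length xs = k}"

definition fvec :: "('a \<Rightarrow> 'a \<Rightarrow> 'a \<Rightarrow> 'b) \<Rightarrow> 'a list \<Rightarrow> 'a list \<Rightarrow> 'a list \<Rightarrow> 'b list" where
  "fvec f x1 x2 x3 = map (\<lambda>i. f (x1 ! i) (x2 ! i) (x3 ! i)) [0..<length x3]"

text \<open>Messages (X1^k, X2^k, X3^k): all 3k components i.i.d. uniform on the alphabet,
  i.e. the uniform distribution on (A^k)^3.\<close>
definition msg_dist :: "nat \<Rightarrow> ('a::finite list \<times> 'a list \<times> 'a list) pmf" where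
  "msg_dist k = pmf_of_set (vecs k \<times> vecs k \<times> vecs k)"

definition zero_error ::
  "('a::finite \<Rightarrow> 'a \<Rightarrow> 'a \<Rightarrow> 'b) \<Rightarrow> nat
   \<Rightarrow> ('a list \<Rightarrow> 'z list) \<Rightarrow> ('a list \<Rightarrow> 'z list)
   \<Rightarrow> ('a list \<Rightarrow> 'z list \<Rightarrow> 'z list) \<Rightarrow> ('a list \<Rightarrow> 'z list \<Rightarrow> 'z list)
   \<Rightarrow> ('z list \<Rightarrow> 'z list \<Rightarrow> 'b list) \<Rightarrow> bool" where
  "zero_error f k phi31 phi32 phi1t phi2t psi \<longleftrightarrow>
     measure_pmf.prob (msg_dist k)
       {(x1, x2, x3). psi (phi1t x1 (phi31 x3)) (phi2t x2 (phi32 x3)) \<noteq> fvec f x1 x2 x3} = 0"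

definition equiv1 :: "('a \<Rightarrow> 'a \<Rightarrow> 'a \<Rightarrow> 'b) \<Rightarrow> 'a \<Rightarrow> 'a \<Rightarrow> 'a \<Rightarrow> bool" where
  "equiv1 f a3 x y \<longleftrightarrow> (\<forall>z. f x z a3 = f y z a3)"

definition equiv2 :: "('a \<Rightarrow> 'a \<Rightarrow> 'a \<Rightarrow> 'b) \<Rightarrow> 'a \<Rightarrow> 'a \<Rightarrow> 'a \<Rightarrow> bool" where
  "equiv2 f a3 x y \<longleftrightarrow> (\<forall>z. f z x a3 = f z y a3)"

definition V1 :: "('a \<Rightarrow> 'a \<Rightarrow> 'a \<Rightarrow> 'b) \<Rightarrow> 'a \<Rightarrow> nat" where
  "V1 f a3 = card (UNIV // {(x, y). equiv1 f a3 x y})"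

definition V2 :: "('a \<Rightarrow> 'a \<Rightarrow> 'a \<Rightarrow> 'b) \<Rightarrow> 'a \<Rightarrow> nat" where
  "V2 f a3 = card (UNIV // {(x, y). equiv2 f a3 x y})"

definition vequiv1 :: "('a \<Rightarrow> 'a \<Rightarrow> 'a \<Rightarrow> 'b) \<Rightarrow> 'a list \<Rightarrow> 'a list \<Rightarrow> 'a list \<Rightarrow> bool" where
  "vequiv1 f a3 x y \<longleftrightarrow> (\<forall>j < length a3. equiv1 f (a3 ! j) (x ! j) (y ! j))"

definition vequiv2 :: "('a \<Rightarrow> 'a \<Rightarrow> 'a \<Rightarrow> 'b) \<Rightarrow> 'a list \<Rightarrow> 'a list \<Rightarrow> 'a list \<Rightarrow> bool" where
  "vequiv2 f a3 x y \<longleftrightarrow> (\<forall>j < length a3. equiv2 f (a3 ! j) (x ! j) (y ! j))"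

end

theory Submission
  imports Defs
begin

text \<open>Since every input has positive probability, zero error means that the decoder is correct
  on every input. If x1 and y1 are inequivalent, some
  coordinate j and some z give f (x1!j) z (a3!j) \<noteq> f (y1!j) z (a3!j); decoding with the constant
  vector z on the other edge then forces distinct labels on the edge (s1,t). Hence the labels of
  that edge separate the classes of the product equivalence, whose number is the product of the
  V1 f (a3!i). The edge (s2,t) is the same argument with the first two arguments of f swapped.\<close>

lemma mem_vecs_iff: "xs \<in> vecs k \<longleftrightarrow> length xs = k"
  by (simp add: vecs_def)

lemma finite_vecs: "finite (vecs k :: 'a::finite list set)"
  using finite_lists_length_eq[of "UNIV :: 'a set" k] by (simp add: vecs_def)

lemma vecs_nonempty: "vecs k \<noteq> {}"
  using mem_vecs_iff[of "replicate k undefined" k] by auto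

lemma set_pmf_msg_dist: "set_pmf (msg_dist k) = vecs k \<times> vecs k \<times> vecs k"
  unfolding msg_dist_def by (simp add: finite_vecs vecs_nonempty)

lemma zero_error_decodes:
  assumes "zero_error f k phi31 phi32 phi1t phi2t psi"
    and "x1 \<in> vecs k" "x2 \<in> vecs k" "x3 \<in> vecs k"
  shows "psi (phi1t x1 (phi31 x3)) (phi2t x2 (phi32 x3)) = fvec f x1 x2 x3"
proof -
  have "set_pmf (msg_dist k) \<inter>
      {(x1, x2, x3). psi (phi1t x1 (phi31 x3)) (phi2t x2 (phi32 x3)) \<noteq> fvec f x1 x2 x3} = {}"
    using assms(1) unfolding zero_error_def by (simp add: measure_pmf_zero_iff)
  then show ?thesis using assms(2-4) unfolding set_pmf_msg_dist by blast
qed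

lemma card_image_le_if_factors_through:
  assumes "finite (g ` A)" and "\<And>x y. x \<in> A \<Longrightarrow> y \<in> A \<Longrightarrow> g x = g y \<Longrightarrow> h x = h y"
  shows "card (h ` A) \<le> card (g ` A)"
proof -
  have "h (inv_into A g (g x)) = h x" if "x \<in> A" for x
    using that by (metis assms(2) f_inv_into_f imageI inv_into_into)
  then have "h ` A = (\<lambda>z. h (inv_into A g z)) ` g ` A"
    by (simp add: image_image cong: image_cong)
  then show ?thesis using card_image_le[OF assms(1)] by simp
qed

lemma PiE_quotients_subset_image_classes:
  assumes "\<And>i. i < k \<Longrightarrow> equiv UNIV (R i)"
  shows "PiE {..<k} (\<lambda>i. UNIV // R i) \<subseteq> (\<lambda>x. \<lambda>i\<in>{..<k}. R i `` {x ! i}) ` vecs k"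
proof
  fix h assume h: "h \<in> PiE {..<k} (\<lambda>i. UNIV // R i)"
  define x where "x = map (\<lambda>i. SOME a. a \<in> h i) [0..<k]"
  have x: "x \<in> vecs k" by (simp add: x_def mem_vecs_iff)
  have "R i `` {x ! i} = h i" if "i < k" for i
  proof -
    have "h i \<in> UNIV // R i" using h that by auto
    then obtain b where b: "h i = R i `` {b}" by (rule quotientE)
    then have "b \<in> h i" using equiv_class_self[OF assms[OF that]] by simp
    then have "(SOME a. a \<in> h i) \<in> h i" by (rule someI)
    then have "(b, x ! i) \<in> R i" using b that by (simp add: x_def)
    then show ?thesis using b by (simp add: equiv_class_eq[OF assms[OF that]])
  qed
  moreover have "h i = undefined" if "\<not> i < k" for i
    using h that by (auto simp: PiE_def extensional_def)
  ultimately have "(\<lambda>i\<in>{..<k}. R i `` {x ! i}) = h"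
    by (intro ext) simp
  then show "h \<in> (\<lambda>x. \<lambda>i\<in>{..<k}. R i `` {x ! i}) ` vecs k"
    using x by blast
qed

lemma prod_card_quotients_le_card_image:
  fixes R :: "nat \<Rightarrow> ('a::finite \<times> 'a) set" and phi :: "'a list \<Rightarrow> 'c"
  assumes equiv: "\<And>i. i < k \<Longrightarrow> equiv UNIV (R i)"
    and related: "\<And>x y. x \<in> vecs k \<Longrightarrow> y \<in> vecs k \<Longrightarrow> phi x = phi y \<Longrightarrow> \<forall>j<k. (x ! j, y ! j) \<in> R j"
  shows "(\<Prod>i<k. card (UNIV // R i)) \<le> card (phi ` vecs k)"
proof -
  define classes where "classes x = (\<lambda>i\<in>{..<k}. R i `` {x ! i})" for x :: "'a list"
  have "(\<Prod>i<k. card (UNIV // R i)) = card (PiE {..<k} (\<lambda>i. UNIV // R i))"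
    by (simp add: card_PiE)
  also have "\<dots> \<le> card (classes ` vecs k)"
    using PiE_quotients_subset_image_classes[OF equiv] finite_vecs
    by (intro card_mono finite_imageI) (simp_all add: classes_def)
  also have "\<dots> \<le> card (phi ` vecs k)"
  proof (rule card_image_le_if_factors_through)
    fix x y assume "x \<in> vecs k" "y \<in> vecs k" "phi x = phi y"
    then show "classes x = classes y"
      using related equiv unfolding classes_def
      by (intro restrict_ext) (metis equiv_class_eq_iff lessThan_iff)
  qed (simp add: finite_vecs)
  finally show ?thesis .
qed

lemma equiv_equiv1: "equiv UNIV {(x, y). equiv1 f a x y}"
  by (auto simp: equiv_def refl_on_def sym_def trans_def equiv1_def)

lemma vequiv1_if_fvec_eq:
  fixes f :: "'a \<Rightarrow> 'a \<Rightarrow> 'a \<Rightarrow> 'b"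
  assumes "length a3 = k" and "\<forall>z \<in> vecs k. fvec f x z a3 = fvec f y z a3"
  shows "vequiv1 f a3 x y"
  unfolding vequiv1_def equiv1_def
proof (intro allI impI)
  fix j and z :: 'a assume "j < length a3"
  have "replicate k z \<in> vecs k" by (simp add: mem_vecs_iff)
  then have "fvec f x (replicate k z) a3 ! j = fvec f y (replicate k z) a3 ! j"
    using assms(2) by simp
  then show "f (x ! j) z (a3 ! j) = f (y ! j) z (a3 ! j)"
    using \<open>j < length a3\<close> assms(1) by (simp add: fvec_def)
qed

text \<open>D models the decoder with the encoder of the other edge (and a3) built in.\<close>

lemma code_label_eq_imp_vequiv1:
  assumes decodes: "\<forall>x \<in> vecs k. \<forall>z \<in> vecs k. D (enc x) z = fvec f x z a3"
    and "length a3 = k" and "x \<in> vecs k" "y \<in> vecs k" and "enc x = enc y"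
  shows "vequiv1 f a3 x y"
  using assms by (intro vequiv1_if_fvec_eq[OF \<open>length a3 = k\<close>]) metis

lemma prod_V1_le_card_code_labels:
  fixes f :: "'a::finite \<Rightarrow> 'a \<Rightarrow> 'a \<Rightarrow> 'b"
  assumes decodes: "\<forall>x \<in> vecs k. \<forall>z \<in> vecs k. D (enc x) z = fvec f x z a3"
    and "length a3 = k"
  shows "(\<Prod>i<k. V1 f (a3 ! i)) \<le> card (enc ` vecs k)"
  unfolding V1_def
proof (rule prod_card_quotients_le_card_image[OF equiv_equiv1])
  fix x y assume "x \<in> vecs k" "y \<in> vecs k" "enc x = enc y"
  then have "vequiv1 f a3 x y"
    using code_label_eq_imp_vequiv1[where D = D and enc = enc, OF decodes \<open>length a3 = k\<close>] by blast
  then show "\<forall>j<k. (x ! j, y ! j) \<in> {(x, y). equiv1 f (a3 ! j) x y}"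
    using \<open>length a3 = k\<close> by (simp add: vequiv1_def)
qed

lemma vequiv2_eq_vequiv1_swap: "vequiv2 f = vequiv1 (\<lambda>x y. f y x)"
  by (simp add: fun_eq_iff vequiv1_def vequiv2_def equiv1_def equiv2_def)

lemma V2_eq_V1_swap: "V2 f = V1 (\<lambda>x y. f y x)"
  by (simp add: fun_eq_iff V1_def V2_def equiv1_def equiv2_def)

lemma fvec_swap: "length x = length a \<Longrightarrow> length y = length a \<Longrightarrow>
    fvec (\<lambda>x y. f y x) y x a = fvec f x y a"
  by (simp add: fvec_def)

theorem lemma4:
  fixes f :: "'a::finite \<Rightarrow> 'a \<Rightarrow> 'a \<Rightarrow> 'b"
    and k :: nat
    and phi31 phi32 :: "'a list \<Rightarrow> 'z::finite list"
    and phi1t phi2t :: "'a list \<Rightarrow> 'z list \<Rightarrow> 'z list"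
    and psi :: "'z list \<Rightarrow> 'z list \<Rightarrow> 'b list"
    and a3 :: "'a list"
  assumes "CARD('a) > 1"
    and "CARD('z) > 1"
    and "zero_error f k phi31 phi32 phi1t phi2t psi"
    and "a3 \<in> vecs k"
  shows "card ((\<lambda>x1. phi1t x1 (phi31 a3)) ` vecs k) \<ge> (\<Prod>i<k. V1 f (a3 ! i))
    \<and> card ((\<lambda>x2. phi2t x2 (phi32 a3)) ` vecs k) \<ge> (\<Prod>i<k. V2 f (a3 ! i))
    \<and> (\<forall>x1 \<in> vecs k. \<forall>y1 \<in> vecs k. \<not> vequiv1 f a3 x1 y1 \<longrightarrow>
           phi1t x1 (phi31 a3) \<noteq> phi1t y1 (phi31 a3))
    \<and> (\<forall>x2 \<in> vecs k. \<forall>y2 \<in> vecs k. \<not> vequiv2 f a3 x2 y2 \<longrightarrow>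
           phi2t x2 (phi32 a3) \<noteq> phi2t y2 (phi32 a3))"
proof -
  have len: "length a3 = k" using assms(4) by (simp add: mem_vecs_iff)
  define enc1 where "enc1 = (\<lambda>x1. phi1t x1 (phi31 a3))"
  define enc2 where "enc2 = (\<lambda>x2. phi2t x2 (phi32 a3))"
  define dec1 where "dec1 = (\<lambda>c x2. psi c (enc2 x2))"
  define dec2 where "dec2 = (\<lambda>c x1. psi (enc1 x1) c)"
  have correct1: "\<forall>x1 \<in> vecs k. \<forall>x2 \<in> vecs k. dec1 (enc1 x1) x2 = fvec f x1 x2 a3"
    using zero_error_decodes[OF assms(3) _ _ assms(4)] by (simp add: dec1_def enc1_def enc2_def)
  have correct2:
    "\<forall>x2 \<in> vecs k. \<forall>x1 \<in> vecs k. dec2 (enc2 x2) x1 = fvec (\<lambda>x y. f y x) x2 x1 a3"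
  proof (intro ballI)
    fix x1 x2 :: "'a list" assume x1: "x1 \<in> vecs k" and x2: "x2 \<in> vecs k"
    have "fvec (\<lambda>x y. f y x) x2 x1 a3 = fvec f x1 x2 a3"
      using x1 x2 len by (intro fvec_swap) (simp_all add: mem_vecs_iff)
    then show "dec2 (enc2 x2) x1 = fvec (\<lambda>x y. f y x) x2 x1 a3"
      using zero_error_decodes[OF assms(3) x1 x2 assms(4)] by (simp add: dec2_def enc1_def enc2_def)
  qed
  show ?thesis
    using prod_V1_le_card_code_labels[where D = dec1 and enc = enc1, OF correct1 len]
      prod_V1_le_card_code_labels[where D = dec2 and enc = enc2, OF correct2 len]
      code_label_eq_imp_vequiv1[where D = dec1 and enc = enc1, OF correct1 len]
      code_label_eq_imp_vequiv1[where D = dec2 and enc = enc2, OF correct2 len]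
    unfolding enc1_def enc2_def V2_eq_V1_swap vequiv2_eq_vequiv1_swap by blast
qed

end
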